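(* Let $f\in L^2(I)$ and let $g_0$ be the solution to $BEP_{2,\infty}$. Let $h\in L^\infty(\mathbb T)$ be non-negative with support contained in the interior $\mathring J$ of $J$, and let $$a(z)=\frac1{2\pi}\int_J\frac{e^{i\theta}+z}{e^{i\theta}-z}\,h(e^{i\theta})\,d\theta,\qquad z\in\mathbb D.$$ Then $a$ is continuous on $\overline I$ (i.e. extends continuously from $\mathbb D$ to the points of $\overline I$), and $$\mathrm{Re}\,\langle (f-g_0)\overline{g_0},\,a\rangle_I\ \ge 0 .$$
   Context: $\mathbb T$ unit circle, $\mathbb D$ unit disk, $\ell$ normalized Lebesgue measure. $I\subset\mathbb T$ measurable, $J=\mathbb T\setminus I$, $\ell(I)>0,\ell(J)>0$; interiors and closures are taken in $\mathbb T$. $\langle u,v\rangle_E=\frac1{2\pi}\int_E u\bar v\,d\theta$, $\|h\|_{L^2(E)}=\langle h,h\rangle_E^{1/2}$. $H^2$ Hardy space. Problem $BEP_{2,\infty}$: given $f\in L^2(I)$, find $g_0\in H^2$ with $|g_0|\le1$ a.e. on $J$ minimizing $\|f-g\|_{L^2(I)}$ over $g\in H^2$ with $|g|\le1$ a.e. on $J$; it has a unique solution. *)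

theory Defs
  imports "HOL-Analysis.Analysis"
begin

text \<open>The unit circle T is modelled as the sphere of radius 1 in the complex plane,
parametrised by theta in [0, 2 pi] via cis. Functions on T are functions
complex => complex evaluated at cis theta.\<close>

definition Tc :: "complex topology" where
  "Tc = top_of_set (sphere 0 1)"

definition circ_set :: "complex set \<Rightarrow> real set" where
  "circ_set E = {\<theta>\<in>{0..2*pi}. cis \<theta> \<in> E}"

definition tmeasurable :: "complex set \<Rightarrow> bool" where
  "tmeasurable E \<longleftrightarrow> circ_set E \<in> sets lebesgue"

definition ell :: "complex set \<Rightarrow> real" where
  "ell E = measure lebesgue (circ_set E) / (2*pi)"

definition L2_on :: "complex set \<Rightarrow> (complex \<Rightarrow> complex) \<Rightarrow> bool" where
  "L2_on E u \<longleftrightarrow> set_borel_measurable lebesgue (circ_set E) (\<lambda>\<theta>. u (cis \<theta>)) \<and>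
     set_integrable lebesgue (circ_set E) (\<lambda>\<theta>. (cmod (u (cis \<theta>)))^2)"

definition inner_on :: "complex set \<Rightarrow> (complex \<Rightarrow> complex) \<Rightarrow> (complex \<Rightarrow> complex) \<Rightarrow> complex" where
  "inner_on E u v = complex_of_real (1/(2*pi)) *
     (LINT \<theta>:circ_set E|lebesgue. u (cis \<theta>) * cnj (v (cis \<theta>)))"

definition norm_on :: "complex set \<Rightarrow> (complex \<Rightarrow> complex) \<Rightarrow> real" where
  "norm_on E u = sqrt (Re (inner_on E u u))"

text \<open>Hardy space H^2: L^2 functions on T whose negative-index Fourier coefficients vanish.\<close>
definition H2 :: "(complex \<Rightarrow> complex) \<Rightarrow> bool" where
  "H2 g \<longleftrightarrow> L2_on (sphere 0 1) g \<and>
     (\<forall>n::nat. n \<ge> 1 \<longrightarrow> (LINT \<theta>:{0..2*pi}|lebesgue. g (cis \<theta>) * cis (real n * \<theta>)) = 0)"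

definition bep_feasible :: "complex set \<Rightarrow> (complex \<Rightarrow> complex) \<Rightarrow> bool" where
  "bep_feasible J g \<longleftrightarrow> H2 g \<and>
     (AE \<theta> in lebesgue. \<theta> \<in> circ_set J \<longrightarrow> cmod (g (cis \<theta>)) \<le> 1)"

definition bep_solution :: "complex set \<Rightarrow> complex set \<Rightarrow> (complex \<Rightarrow> complex) \<Rightarrow> (complex \<Rightarrow> complex) \<Rightarrow> bool" where
  "bep_solution I J f g0 \<longleftrightarrow> bep_feasible J g0 \<and>
     (\<forall>g. bep_feasible J g \<longrightarrow> norm_on I (\<lambda>z. f z - g0 z) \<le> norm_on I (\<lambda>z. f z - g z))"

definition Linf_T :: "(complex \<Rightarrow> real) \<Rightarrow> bool" where
  "Linf_T h \<longleftrightarrow> set_borel_measurable lebesgue {0..2*pi} (\<lambda>\<theta>. h (cis \<theta>)) \<and>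
     (\<exists>B. AE \<theta> in lebesgue. \<theta> \<in> {0..2*pi} \<longrightarrow> \<bar>h (cis \<theta>)\<bar> \<le> B)"

definition ess_supp_in :: "(complex \<Rightarrow> real) \<Rightarrow> complex set \<Rightarrow> bool" where
  "ess_supp_in h S \<longleftrightarrow> (\<exists>K. closedin Tc K \<and> K \<subseteq> S \<and>
     (AE \<theta> in lebesgue. \<theta> \<in> {0..2*pi} \<longrightarrow> cis \<theta> \<notin> K \<longrightarrow> h (cis \<theta>) = 0))"

definition herglotz :: "complex set \<Rightarrow> (complex \<Rightarrow> real) \<Rightarrow> complex \<Rightarrow> complex" where
  "herglotz J h z = complex_of_real (1/(2*pi)) *
     (LINT \<theta>:circ_set J|lebesgue. ((cis \<theta> + z) / (cis \<theta> - z)) * complex_of_real (h (cis \<theta>)))"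

end

theory Submission
  imports Defs
begin

text \<open>Functions on the circle are handled through the angle: the residual density W is
  1_I (f - g0) conj g0, and herglotz_int w is the Herglotz integral of a weight w on the line.
  1. The Herglotz kernel is bounded by 2/delta at distance delta from the support of w, so
     dominated convergence gives continuity of a on the disc together with every closed set
     disjoint from the compact support K of w; closure I is such a set. In the disc a has
     non-negative real part, and on each circle of radius r below 1 it is a power series with
     absolutely summable coefficients.
  2. First variation: H2 is stable under multiplication by such series, so for eps positive
     and t small the function g0 times (1 - t (a_r + eps)) is admissible for BEP, where a_r is
     a on the circle of radius r. Optimality of g0 gives Re of the inner product of W with
     a_r + eps non-negative; letting eps tend to 0 gives the inequality for a_r.
  3. Radial limit: on closure I the functions a_r are uniformly bounded and converge to a as
     r tends to 1, so dominated convergence transfers the inequality to the boundary. \<close>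

definition herglotz_kernel :: "real \<Rightarrow> complex \<Rightarrow> complex" where
  "herglotz_kernel \<theta> z = (cis \<theta> + z) / (cis \<theta> - z)"

definition herglotz_int :: "(real \<Rightarrow> real) \<Rightarrow> complex \<Rightarrow> complex" where
  "herglotz_int w z = complex_of_real (1/(2*pi)) *
     integral\<^sup>L lebesgue (\<lambda>\<theta>. herglotz_kernel \<theta> z * complex_of_real (w \<theta>))"

lemma herglotz_eq_herglotz_int:
  "herglotz J h = herglotz_int (\<lambda>\<theta>. indicator (circ_set J) \<theta> * h (cis \<theta>))"
  unfolding herglotz_def herglotz_int_def set_lebesgue_integral_def herglotz_kernel_def
  by (intro ext arg_cong2[where f="(*)"] refl Bochner_Integration.integral_cong)
     (auto split: split_indicator)

lemma cis_measurable [measurable]: "cis \<in> borel_measurable lebesgue"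
  by (rule measurable_completion) (simp add: borel_measurable_continuous_onI continuous_on_cis continuous_on_id)

lemma cnj_measurable [measurable]: "f \<in> borel_measurable M \<Longrightarrow> (\<lambda>x. cnj (f x)) \<in> borel_measurable M"
  by (rule measurable_compose[where f=f and g=cnj])
     (auto intro: borel_measurable_continuous_onI continuous_on_cnj continuous_on_id)

lemma herglotz_kernel_measurable [measurable]: "(\<lambda>\<theta>. herglotz_kernel \<theta> z) \<in> borel_measurable lebesgue"
  unfolding herglotz_kernel_def by measurable

lemma herglotz_kernel_bound:
  assumes "cmod z \<le> 1" "0 < \<delta>" "\<delta> \<le> cmod (cis \<theta> - z)"
  shows "cmod (herglotz_kernel \<theta> z) \<le> 2 / \<delta>"
proof -
  have "cmod (cis \<theta> + z) \<le> 2" using norm_triangle_ineq[of "cis \<theta>" z] assms by simp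
  then show ?thesis unfolding herglotz_kernel_def norm_divide using assms
    by (intro frac_le) auto
qed

text \<open>The real part of the kernel is the Poisson kernel, hence non-negative in the disc.\<close>
lemma Re_herglotz_kernel_nonneg:
  assumes "cmod z < 1"
  shows "0 \<le> Re (herglotz_kernel \<theta> z)"
proof -
  have "Re (cis \<theta> + z) * Re (cis \<theta> - z) + Im (cis \<theta> + z) * Im (cis \<theta> - z)
        = ((cos \<theta>)\<^sup>2 + (sin \<theta>)\<^sup>2) - ((Re z)\<^sup>2 + (Im z)\<^sup>2)"
    by (simp add: power2_eq_square algebra_simps)
  also have "\<dots> = 1 - (cmod z)\<^sup>2" by (simp add: cmod_power2)
  finally show ?thesis using assms unfolding herglotz_kernel_def Re_divide'
    by (simp add: abs_square_le_1)
qed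

lemma herglotz_kernel_geometric:
  assumes "cmod z < 1"
  shows "herglotz_kernel \<theta> z = -1 + 2 * (\<Sum>k. (z * cnj (cis \<theta>)) ^ k)"
proof -
  let ?q = "z * cnj (cis \<theta>)"
  have q: "norm ?q < 1" using assms by (simp add: norm_mult)
  have cc: "cis \<theta> * cnj (cis \<theta>) = 1" by (simp add: cis_cnj cis_mult)
  have "cis \<theta> - z = cis \<theta> * (1 - ?q)" "cis \<theta> + z = cis \<theta> * (1 + ?q)"
    using cc by (simp_all add: algebra_simps)
  then have "herglotz_kernel \<theta> z = (1 + ?q) / (1 - ?q)" unfolding herglotz_kernel_def by simp
  also have "\<dots> = -1 + 2 * (1 / (1 - ?q))"
  proof -
    have "1 - ?q \<noteq> 0" using q by auto
    then show ?thesis by (simp add: field_simps)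
  qed
  finally show ?thesis using suminf_geometric[OF q] by simp
qed

lemma herglotz_kernel_weight_bound:
  assumes "cmod z \<le> 1" "0 < \<delta>"
    and "AE \<theta> in lebesgue. w \<theta> \<noteq> 0 \<longrightarrow> \<delta> \<le> cmod (cis \<theta> - z)"
  shows "AE \<theta> in lebesgue. norm (herglotz_kernel \<theta> z * complex_of_real (w \<theta>)) \<le> 2/\<delta> * \<bar>w \<theta>\<bar>"
  using assms(3)
proof eventually_elim
  case (elim \<theta>)
  show ?case
  proof (cases "w \<theta> = 0")
    case False
    then have "cmod (herglotz_kernel \<theta> z) \<le> 2/\<delta>" using elim herglotz_kernel_bound assms by auto
    then have "cmod (herglotz_kernel \<theta> z) * \<bar>w \<theta>\<bar> \<le> 2/\<delta> * \<bar>w \<theta>\<bar>"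
      by (rule mult_right_mono) simp
    then show ?thesis by (simp add: norm_mult)
  qed simp
qed

lemma herglotz_integrand_integrable:
  assumes w: "integrable lebesgue w" and "cmod z \<le> 1" "0 < \<delta>"
    and "AE \<theta> in lebesgue. w \<theta> \<noteq> 0 \<longrightarrow> \<delta> \<le> cmod (cis \<theta> - z)"
  shows "integrable lebesgue (\<lambda>\<theta>. herglotz_kernel \<theta> z * complex_of_real (w \<theta>))"
proof (rule Bochner_Integration.integrable_bound)
  have [measurable]: "w \<in> borel_measurable lebesgue" using w by auto
  show "integrable lebesgue (\<lambda>\<theta>. 2/\<delta> * \<bar>w \<theta>\<bar>)" using w by auto
  show "(\<lambda>\<theta>. herglotz_kernel \<theta> z * complex_of_real (w \<theta>)) \<in> borel_measurable lebesgue"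
    by measurable
  show "AE \<theta> in lebesgue. norm (herglotz_kernel \<theta> z * complex_of_real (w \<theta>)) \<le> norm (2/\<delta> * \<bar>w \<theta>\<bar>)"
    using herglotz_kernel_weight_bound[OF assms(2-)] by eventually_elim (use \<open>0<\<delta>\<close> in auto)
qed

lemma herglotz_int_bound:
  assumes w: "integrable lebesgue w" and "cmod z \<le> 1" "0 < \<delta>"
    and "AE \<theta> in lebesgue. w \<theta> \<noteq> 0 \<longrightarrow> \<delta> \<le> cmod (cis \<theta> - z)"
  shows "cmod (herglotz_int w z) \<le> 1/(2*pi) * (2/\<delta> * integral\<^sup>L lebesgue (\<lambda>\<theta>. \<bar>w \<theta>\<bar>))"
proof -
  have "norm (integral\<^sup>L lebesgue (\<lambda>\<theta>. herglotz_kernel \<theta> z * complex_of_real (w \<theta>)))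
        \<le> integral\<^sup>L lebesgue (\<lambda>\<theta>. norm (herglotz_kernel \<theta> z * complex_of_real (w \<theta>)))"
    by (rule integral_norm_bound)
  also have "\<dots> \<le> integral\<^sup>L lebesgue (\<lambda>\<theta>. 2/\<delta> * \<bar>w \<theta>\<bar>)"
    using herglotz_integrand_integrable[OF assms] w herglotz_kernel_weight_bound[OF assms(2-)]
    by (intro integral_mono_AE) auto
  also have "\<dots> = 2/\<delta> * integral\<^sup>L lebesgue (\<lambda>\<theta>. \<bar>w \<theta>\<bar>)" by simp
  finally have bound: "norm (integral\<^sup>L lebesgue (\<lambda>\<theta>. herglotz_kernel \<theta> z * complex_of_real (w \<theta>)))
        \<le> 2/\<delta> * integral\<^sup>L lebesgue (\<lambda>\<theta>. \<bar>w \<theta>\<bar>)" .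
  have "cmod (herglotz_int w z) =
      1/(2*pi) * norm (integral\<^sup>L lebesgue (\<lambda>\<theta>. herglotz_kernel \<theta> z * complex_of_real (w \<theta>)))"
    unfolding herglotz_int_def norm_mult norm_of_real by simp
  also have "\<dots> \<le> 1/(2*pi) * (2/\<delta> * integral\<^sup>L lebesgue (\<lambda>\<theta>. \<bar>w \<theta>\<bar>))"
    by (rule mult_left_mono[OF bound]) simp
  finally show ?thesis .
qed

lemma herglotz_int_tendsto:
  assumes w: "integrable lebesgue w" and "0 < \<delta>" and x: "\<And>n. cmod (x n) \<le> 1" "x \<longlonglongrightarrow> z"
    and sep: "AE \<theta> in lebesgue. w \<theta> \<noteq> 0 \<longrightarrow> \<delta> \<le> cmod (cis \<theta> - z)"
  shows "(\<lambda>n. herglotz_int w (x n)) \<longlonglongrightarrow> herglotz_int w z"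
proof -
  have [measurable]: "w \<in> borel_measurable lebesgue" using w by auto
  obtain N where N: "\<And>n. n \<ge> N \<Longrightarrow> dist (x n) z < \<delta>/2"
    using metric_LIMSEQ_D[OF x(2), of "\<delta>/2"] \<open>0 < \<delta>\<close> by auto
  have sep_n: "AE \<theta> in lebesgue. w \<theta> \<noteq> 0 \<longrightarrow> \<delta>/2 \<le> cmod (cis \<theta> - x (n + N))" for n
    using sep
  proof eventually_elim
    case (elim \<theta>)
    have "cmod (cis \<theta> - z) \<le> cmod (cis \<theta> - x (n + N)) + dist (x (n + N)) z"
      using norm_triangle_ineq[of "cis \<theta> - x (n + N)" "x (n + N) - z"] by (simp add: dist_norm)
    then show ?case using elim N[of "n + N"] by auto
  qed
  have "(\<lambda>n. integral\<^sup>L lebesgue (\<lambda>\<theta>. herglotz_kernel \<theta> (x (n + N)) * complex_of_real (w \<theta>)))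
     \<longlonglongrightarrow> integral\<^sup>L lebesgue (\<lambda>\<theta>. herglotz_kernel \<theta> z * complex_of_real (w \<theta>))"
  proof (rule integral_dominated_convergence[where w="\<lambda>\<theta>. 2/(\<delta>/2) * \<bar>w \<theta>\<bar>"])
    show "integrable lebesgue (\<lambda>\<theta>. 2/(\<delta>/2) * \<bar>w \<theta>\<bar>)" using w by auto
    show "AE \<theta> in lebesgue. (\<lambda>n. herglotz_kernel \<theta> (x (n + N)) * complex_of_real (w \<theta>))
            \<longlonglongrightarrow> herglotz_kernel \<theta> z * complex_of_real (w \<theta>)"
      using sep
    proof eventually_elim
      case (elim \<theta>)
      show ?case
      proof (cases "w \<theta> = 0")
        case False
        then have "cis \<theta> - z \<noteq> 0" using elim \<open>0 < \<delta>\<close> by auto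
        then show ?thesis unfolding herglotz_kernel_def
          by (intro tendsto_intros LIMSEQ_ignore_initial_segment[OF x(2)]) auto
      qed simp
    qed
    show "AE \<theta> in lebesgue. norm (herglotz_kernel \<theta> (x (n + N)) * complex_of_real (w \<theta>))
            \<le> 2/(\<delta>/2) * \<bar>w \<theta>\<bar>" for n
      using herglotz_kernel_weight_bound[OF x(1) _ sep_n] \<open>0 < \<delta>\<close> by simp
  qed measurable
  then show ?thesis unfolding herglotz_int_def
    by (rule LIMSEQ_offset[where k=N, OF tendsto_mult[OF tendsto_const]])
qed

lemma herglotz_int_continuous_on:
  assumes w: "integrable lebesgue w" and K: "compact K" and C: "closed C" "K \<inter> C = {}" "C \<subseteq> cball 0 1"
    and supp: "AE \<theta> in lebesgue. w \<theta> \<noteq> 0 \<longrightarrow> cis \<theta> \<in> K"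
  shows "continuous_on (ball 0 1 \<union> C) (herglotz_int w)"
proof (rule continuous_on_sequentiallyI)
  fix x a
  assume xs: "\<forall>n. x n \<in> ball 0 1 \<union> C" and a: "a \<in> ball 0 1 \<union> C" and lim: "x \<longlonglongrightarrow> a"
  have x_disc: "cmod (x n) \<le> 1" for n using xs C(3) by (metis less_imp_le subset_iff mem_cball_0 Un_iff mem_ball_0)
  obtain \<delta> where "0 < \<delta>" and sep: "AE \<theta> in lebesgue. w \<theta> \<noteq> 0 \<longrightarrow> \<delta> \<le> cmod (cis \<theta> - a)"
  proof (cases "a \<in> ball 0 1")
    case True
    have "1 - cmod a \<le> cmod (cis \<theta> - a)" for \<theta>
      using norm_triangle_ineq2[of "cis \<theta>" a] by simp
    then show ?thesis using True by (intro that[of "1 - cmod a"]) auto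
  next
    case False
    then have "a \<in> C" using a by auto
    obtain d where "d > 0" and d: "\<And>k y. k \<in> K \<Longrightarrow> y \<in> C \<Longrightarrow> d \<le> dist k y"
      using separate_compact_closed[OF K C(1,2)] by blast
    show ?thesis
    proof (rule that[OF \<open>d > 0\<close>])
      show "AE \<theta> in lebesgue. w \<theta> \<noteq> 0 \<longrightarrow> d \<le> cmod (cis \<theta> - a)"
        using supp by eventually_elim (use d[OF _ \<open>a \<in> C\<close>] in \<open>auto simp: dist_norm\<close>)
    qed
  qed
  then show "(\<lambda>n. herglotz_int w (x n)) \<longlonglongrightarrow> herglotz_int w a"
    by (rule herglotz_int_tendsto[OF w _ x_disc lim])
qed

lemma herglotz_int_continuous_on_ball:
  assumes "integrable lebesgue w"
  shows "continuous_on (ball 0 1) (herglotz_int w)"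
  using herglotz_int_continuous_on[OF assms compact_sphere[of 0 1] closed_empty] by simp

lemma herglotz_int_Re_nonneg:
  assumes w: "integrable lebesgue w" and pos: "AE \<theta> in lebesgue. 0 \<le> w \<theta>" and z: "cmod z < 1"
  shows "0 \<le> Re (herglotz_int w z)"
proof -
  have sep: "AE \<theta> in lebesgue. w \<theta> \<noteq> 0 \<longrightarrow> 1 - cmod z \<le> cmod (cis \<theta> - z)"
    using norm_triangle_ineq2[of "cis _" z] by simp
  have int: "integrable lebesgue (\<lambda>\<theta>. herglotz_kernel \<theta> z * complex_of_real (w \<theta>))"
    by (rule herglotz_integrand_integrable[OF w _ _ sep]) (use z in auto)
  have "0 \<le> integral\<^sup>L lebesgue (\<lambda>\<theta>. Re (herglotz_kernel \<theta> z * complex_of_real (w \<theta>)))"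
    using pos by (intro integral_nonneg_AE)
      (auto elim!: eventually_mono intro: mult_nonneg_nonneg Re_herglotz_kernel_nonneg[OF z])
  moreover have "Re (integral\<^sup>L lebesgue (\<lambda>\<theta>. herglotz_kernel \<theta> z * complex_of_real (w \<theta>)))
      = integral\<^sup>L lebesgue (\<lambda>\<theta>. Re (herglotz_kernel \<theta> z * complex_of_real (w \<theta>)))"
    by (rule integral_Re[OF int, symmetric])
  ultimately show ?thesis unfolding herglotz_int_def by simp
qed

definition fourier_coeff :: "(real \<Rightarrow> real) \<Rightarrow> nat \<Rightarrow> complex" where
  "fourier_coeff w k = integral\<^sup>L lebesgue (\<lambda>\<theta>. cnj (cis \<theta>) ^ k * complex_of_real (w \<theta>))"

lemma fourier_coeff_bound:
  "integrable lebesgue w \<Longrightarrow> cmod (fourier_coeff w k) \<le> integral\<^sup>L lebesgue (\<lambda>\<theta>. \<bar>w \<theta>\<bar>)"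
  unfolding fourier_coeff_def
  by (rule order.trans[OF integral_norm_bound]) (simp add: norm_mult norm_power)

text \<open>Taylor expansion of the Herglotz integral in the disc, obtained by integrating the
  geometric series of the kernel term by term.\<close>
lemma herglotz_int_power_series:
  assumes w: "integrable lebesgue w" and z: "cmod z < 1"
  shows "summable (\<lambda>k. z ^ k * fourier_coeff w k)"
    and "herglotz_int w z = complex_of_real (1/(2*pi)) *
           (- complex_of_real (integral\<^sup>L lebesgue w) + 2 * (\<Sum>k. z ^ k * fourier_coeff w k))"
proof -
  have [measurable]: "w \<in> borel_measurable lebesgue" using w by auto
  define f where "f k \<theta> = (z * cnj (cis \<theta>)) ^ k * complex_of_real (w \<theta>)" for k \<theta>
  have norm_f: "norm (f k \<theta>) = cmod z ^ k * \<bar>w \<theta>\<bar>" for k \<theta>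
    by (simp add: f_def norm_mult norm_power)
  have int_f: "integrable lebesgue (f k)" for k
  proof (rule Bochner_Integration.integrable_bound[where f="\<lambda>\<theta>. \<bar>w \<theta>\<bar>"])
    show "integrable lebesgue (\<lambda>\<theta>. \<bar>w \<theta>\<bar>)" using w by auto
    show "f k \<in> borel_measurable lebesgue" unfolding f_def by measurable
    show "AE \<theta> in lebesgue. norm (f k \<theta>) \<le> norm \<bar>w \<theta>\<bar>"
      unfolding norm_f using z by (auto intro!: mult_left_le_one_le power_le_one)
  qed
  have sum_pt: "AE \<theta> in lebesgue. summable (\<lambda>k. norm (f k \<theta>))"
    and sum_int: "summable (\<lambda>k. integral\<^sup>L lebesgue (\<lambda>\<theta>. norm (f k \<theta>)))"
    unfolding norm_f using z by (auto intro!: summable_mult2 summable_geometric)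
  have integral_f: "integral\<^sup>L lebesgue (f k) = z ^ k * fourier_coeff w k" for k
    unfolding f_def fourier_coeff_def power_mult_distrib by (simp add: mult.assoc)
  show "summable (\<lambda>k. z ^ k * fourier_coeff w k)"
    using summable_integral[OF int_f sum_pt sum_int] integral_f by simp
  have kernel_f: "herglotz_kernel \<theta> z * complex_of_real (w \<theta>)
      = - complex_of_real (w \<theta>) + 2 * (\<Sum>k. f k \<theta>)" for \<theta>
  proof -
    have "summable (\<lambda>k. (z * cnj (cis \<theta>)) ^ k)"
      using z by (intro summable_geometric) (simp add: norm_mult)
    then have "(\<Sum>k. f k \<theta>) = (\<Sum>k. (z * cnj (cis \<theta>)) ^ k) * complex_of_real (w \<theta>)"
      unfolding f_def by (rule suminf_mult2[symmetric])
    moreover have "\<And>S x::complex. (-1 + 2*S)*x = -x + 2*(S*x)" by (simp add: algebra_simps)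
    ultimately show ?thesis unfolding herglotz_kernel_geometric[OF z] by metis
  qed
  have "integral\<^sup>L lebesgue (\<lambda>\<theta>. herglotz_kernel \<theta> z * complex_of_real (w \<theta>))
      = - complex_of_real (integral\<^sup>L lebesgue w) + 2 * (\<Sum>k. z ^ k * fourier_coeff w k)"
    unfolding kernel_f using w integrable_suminf[OF int_f sum_pt sum_int]
    by (simp add: integral_suminf[OF int_f sum_pt sum_int] integral_f)
  then show "herglotz_int w z = complex_of_real (1/(2*pi)) *
      (- complex_of_real (integral\<^sup>L lebesgue w) + 2 * (\<Sum>k. z ^ k * fourier_coeff w k))"
    unfolding herglotz_int_def by simp
qed

lemma herglotz_int_circle_series:
  assumes w: "integrable lebesgue w" and r: "0 \<le> r" "r < 1"
  obtains A \<gamma> where "summable (\<lambda>k. cmod (\<gamma> k))"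
    "\<And>z. cmod z \<le> 1 \<Longrightarrow> herglotz_int w (complex_of_real r * z) = A + (\<Sum>k. \<gamma> k * z ^ k)"
proof
  define c where "c = complex_of_real (1/(2*pi))"
  define \<gamma> where "\<gamma> k = c * 2 * (complex_of_real (r ^ k) * fourier_coeff w k)" for k
  define A where "A = c * (- complex_of_real (integral\<^sup>L lebesgue w))"
  let ?M = "integral\<^sup>L lebesgue (\<lambda>\<theta>. \<bar>w \<theta>\<bar>)"
  show "summable (\<lambda>k. cmod (\<gamma> k))"
  proof (rule summable_comparison_test[where g="\<lambda>k. cmod c * 2 * (r ^ k * ?M)"])
    show "summable (\<lambda>k. cmod c * 2 * (r ^ k * ?M))"
      using r by (intro summable_mult summable_mult2 summable_geometric) auto
    show "\<exists>N. \<forall>n\<ge>N. norm (cmod (\<gamma> n)) \<le> cmod c * 2 * (r ^ n * ?M)"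
    proof (intro exI allI impI)
      fix n
      have "r ^ n * cmod (fourier_coeff w n) \<le> r ^ n * ?M"
        using r fourier_coeff_bound[OF w] by (intro mult_left_mono) auto
      then show "norm (cmod (\<gamma> n)) \<le> cmod c * 2 * (r ^ n * ?M)"
        unfolding \<gamma>_def using r by (simp add: norm_mult norm_power mult_left_mono)
    qed
  qed
  fix z :: complex assume "cmod z \<le> 1"
  then have "r * cmod z \<le> r" using r by (simp add: mult_left_le)
  then have rz: "cmod (complex_of_real r * z) < 1" using r by (simp add: norm_mult)
  have "herglotz_int w (complex_of_real r * z)
      = A + (c * 2) * (\<Sum>k. (complex_of_real r * z) ^ k * fourier_coeff w k)"
    unfolding herglotz_int_power_series(2)[OF w rz] A_def c_def by (simp add: algebra_simps)
  also have "\<dots> = A + (\<Sum>k. \<gamma> k * z ^ k)"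
    unfolding suminf_mult[OF herglotz_int_power_series(1)[OF w rz], symmetric] \<gamma>_def
    by (simp add: power_mult_distrib algebra_simps)
  finally show "herglotz_int w (complex_of_real r * z) = A + (\<Sum>k. \<gamma> k * z ^ k)" .
qed

lemma cis_multiple_measurable [measurable]: "(\<lambda>\<phi>. cis (c * \<phi>)) \<in> borel_measurable lebesgue"
  by (rule measurable_completion)
     (simp add: borel_measurable_continuous_onI continuous_on_cis continuous_on_id continuous_on_mult)

lemma fourier_series_measurable:
  assumes "summable (\<lambda>k. cmod (\<gamma> k))"
  shows "(\<lambda>\<phi>. A + (\<Sum>k. \<gamma> k * cis (real k * \<phi>))) \<in> borel_measurable lebesgue"
proof (rule borel_measurable_LIMSEQ_metric[where f="\<lambda>n \<phi>. A + (\<Sum>k<n. \<gamma> k * cis (real k * \<phi>))"])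
  have "summable (\<lambda>k. \<gamma> k * cis (real k * \<phi>))" for \<phi>
    by (rule summable_norm_cancel) (simp add: norm_mult assms)
  then show "(\<lambda>n. A + (\<Sum>k<n. \<gamma> k * cis (real k * \<phi>))) \<longlonglongrightarrow> A + (\<Sum>k. \<gamma> k * cis (real k * \<phi>))" for \<phi>
    by (intro tendsto_intros summable_LIMSEQ)
  show "(\<lambda>\<phi>. A + (\<Sum>k<n. \<gamma> k * cis (real k * \<phi>))) \<in> borel_measurable lebesgue" for n
    by measurable
qed

lemma fourier_series_bound:
  assumes "summable (\<lambda>k. cmod (\<gamma> k))"
  shows "cmod (A + (\<Sum>k. \<gamma> k * cis (real k * \<phi>))) \<le> cmod A + (\<Sum>k. cmod (\<gamma> k))"
proof -
  have "cmod (\<Sum>k. \<gamma> k * cis (real k * \<phi>)) \<le> (\<Sum>k. cmod (\<gamma> k))"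
    by (rule norm_suminf_le[OF _ assms]) (simp add: norm_mult)
  then show ?thesis using norm_triangle_ineq[of A "\<Sum>k. \<gamma> k * cis (real k * \<phi>)"] by linarith
qed

lemma circ_set_sphere: "circ_set (sphere 0 1) = {0..2*pi}"
  unfolding circ_set_def by auto

lemma L2_on_integrable:
  assumes "L2_on E u"
  shows "integrable lebesgue (\<lambda>\<theta>. indicator (circ_set E) \<theta> *\<^sub>R u (cis \<theta>))"
proof (rule Bochner_Integration.integrable_bound[where f="\<lambda>\<theta>. indicator {0..2*pi} \<theta> *\<^sub>R (1::real) +
      indicator (circ_set E) \<theta> *\<^sub>R (cmod (u (cis \<theta>)))\<^sup>2"])
  have m: "set_borel_measurable lebesgue (circ_set E) (\<lambda>\<theta>. u (cis \<theta>))"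
    and i: "set_integrable lebesgue (circ_set E) (\<lambda>\<theta>. (cmod (u (cis \<theta>)))\<^sup>2)"
    using assms unfolding L2_on_def by auto
  show "(\<lambda>\<theta>. indicator (circ_set E) \<theta> *\<^sub>R u (cis \<theta>)) \<in> borel_measurable lebesgue"
    using m unfolding set_borel_measurable_def .
  show "integrable lebesgue (\<lambda>\<theta>. indicator {0..2*pi} \<theta> *\<^sub>R (1::real) +
      indicator (circ_set E) \<theta> *\<^sub>R (cmod (u (cis \<theta>)))\<^sup>2)"
    using i integrable_real_indicator[of "{0..2*pi}" lebesgue] unfolding set_integrable_def by auto
  have "x \<le> 1 + x\<^sup>2" for x :: real
    using sum_squares_bound[of x "1/2"] by (simp add: power2_eq_square)
  moreover have "circ_set E \<subseteq> {0..2*pi}" unfolding circ_set_def by auto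
  ultimately show "AE \<theta> in lebesgue. norm (indicator (circ_set E) \<theta> *\<^sub>R u (cis \<theta>)) \<le>
      norm (indicator {0..2*pi} \<theta> *\<^sub>R (1::real) + indicator (circ_set E) \<theta> *\<^sub>R (cmod (u (cis \<theta>)))\<^sup>2)"
    by (intro AE_I2) (auto split: split_indicator)
qed

lemma integrable_mult_cis:
  assumes "integrable lebesgue G"
  shows "integrable lebesgue (\<lambda>\<theta>. G \<theta> * cis (c * \<theta>))"
proof (rule Bochner_Integration.integrable_bound[where f="\<lambda>\<theta>. norm (G \<theta>)"])
  have [measurable]: "G \<in> borel_measurable lebesgue" using assms by auto
  show "(\<lambda>\<theta>. G \<theta> * cis (c * \<theta>)) \<in> borel_measurable lebesgue" by measurable
  show "integrable lebesgue (\<lambda>\<theta>. norm (G \<theta>))" using assms by auto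
  show "AE \<theta> in lebesgue. norm (G \<theta> * cis (c * \<theta>)) \<le> norm (norm (G \<theta>))"
    by (simp add: norm_mult)
qed

definition square_integrable :: "(real \<Rightarrow> complex) \<Rightarrow> bool" where
  "square_integrable U \<longleftrightarrow> U \<in> borel_measurable lebesgue \<and> integrable lebesgue (\<lambda>x. (cmod (U x))\<^sup>2)"

lemma L2_on_iff_square_integrable:
  "L2_on E u \<longleftrightarrow> square_integrable (\<lambda>\<theta>. indicator (circ_set E) \<theta> *\<^sub>R u (cis \<theta>))"
proof -
  have "(\<lambda>\<theta>. (cmod (indicator (circ_set E) \<theta> *\<^sub>R u (cis \<theta>)))\<^sup>2)
      = (\<lambda>\<theta>. indicator (circ_set E) \<theta> *\<^sub>R (cmod (u (cis \<theta>)))\<^sup>2)"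
    by (auto split: split_indicator)
  then show ?thesis
    unfolding square_integrable_def L2_on_def set_borel_measurable_def set_integrable_def by simp
qed

text \<open>The product of two square integrable functions is integrable, by the pointwise bound
  |u v| <= |u|^2 + |v|^2.\<close>
lemma square_integrable_product:
  assumes "square_integrable U" "square_integrable V"
  shows "integrable lebesgue (\<lambda>x. U x * cnj (V x))"
proof (rule Bochner_Integration.integrable_bound[where f="\<lambda>x. (cmod (U x))\<^sup>2 + (cmod (V x))\<^sup>2"])
  have [measurable]: "U \<in> borel_measurable lebesgue" "V \<in> borel_measurable lebesgue"
    using assms unfolding square_integrable_def by auto
  show "(\<lambda>x. U x * cnj (V x)) \<in> borel_measurable lebesgue" by measurable
  show "integrable lebesgue (\<lambda>x. (cmod (U x))\<^sup>2 + (cmod (V x))\<^sup>2)"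
    using assms unfolding square_integrable_def by auto
  have "cmod (U x) * cmod (V x) \<le> (cmod (U x))\<^sup>2 + (cmod (V x))\<^sup>2" for x
    using sum_squares_bound[of "cmod (U x)" "cmod (V x)"]
      mult_nonneg_nonneg[OF norm_ge_zero norm_ge_zero, of "U x" "V x"] by linarith
  then show "AE x in lebesgue. norm (U x * cnj (V x)) \<le> norm ((cmod (U x))\<^sup>2 + (cmod (V x))\<^sup>2)"
    by (simp add: norm_mult)
qed

lemma square_integrable_diff:
  assumes "square_integrable U" "square_integrable V"
  shows "square_integrable (\<lambda>x. U x - V x)"
  unfolding square_integrable_def
proof
  have [measurable]: "U \<in> borel_measurable lebesgue" "V \<in> borel_measurable lebesgue"
    using assms unfolding square_integrable_def by auto
  show "(\<lambda>x. U x - V x) \<in> borel_measurable lebesgue" by measurable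
  show "integrable lebesgue (\<lambda>x. (cmod (U x - V x))\<^sup>2)"
  proof (rule Bochner_Integration.integrable_bound[where f="\<lambda>x. 2 * (cmod (U x))\<^sup>2 + 2 * (cmod (V x))\<^sup>2"])
    show "integrable lebesgue (\<lambda>x. 2 * (cmod (U x))\<^sup>2 + 2 * (cmod (V x))\<^sup>2)"
      using assms unfolding square_integrable_def by auto
    have "(cmod (U x - V x))\<^sup>2 \<le> 2 * (cmod (U x))\<^sup>2 + 2 * (cmod (V x))\<^sup>2" for x
    proof -
      have "(cmod (U x - V x))\<^sup>2 \<le> (cmod (U x) + cmod (V x))\<^sup>2"
        by (rule power_mono[OF norm_triangle_ineq4]) simp
      also have "\<dots> \<le> 2 * (cmod (U x))\<^sup>2 + 2 * (cmod (V x))\<^sup>2"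
        using sum_squares_bound[of "cmod (U x)" "cmod (V x)"] by (simp add: power2_eq_square algebra_simps)
      finally show ?thesis .
    qed
    then show "AE x in lebesgue. norm ((cmod (U x - V x))\<^sup>2) \<le> norm (2 * (cmod (U x))\<^sup>2 + 2 * (cmod (V x))\<^sup>2)"
      by simp
  qed measurable
qed

lemma square_integrable_mult_bounded:
  assumes "square_integrable U" and Q: "Q \<in> borel_measurable lebesgue"
    and bound: "\<And>x. cmod (Q x) \<le> B"
  shows "square_integrable (\<lambda>x. U x * Q x)"
  unfolding square_integrable_def
proof
  have [measurable]: "U \<in> borel_measurable lebesgue" "Q \<in> borel_measurable lebesgue"
    using assms unfolding square_integrable_def by auto
  show "(\<lambda>x. U x * Q x) \<in> borel_measurable lebesgue" by measurable
  show "integrable lebesgue (\<lambda>x. (cmod (U x * Q x))\<^sup>2)"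
  proof (rule Bochner_Integration.integrable_bound[where f="\<lambda>x. B\<^sup>2 * (cmod (U x))\<^sup>2"])
    show "integrable lebesgue (\<lambda>x. B\<^sup>2 * (cmod (U x))\<^sup>2)"
      using assms unfolding square_integrable_def by auto
    have "(cmod (U x))\<^sup>2 * (cmod (Q x))\<^sup>2 \<le> (cmod (U x))\<^sup>2 * B\<^sup>2" for x
      by (intro mult_left_mono power_mono bound) auto
    then show "AE x in lebesgue. norm ((cmod (U x * Q x))\<^sup>2) \<le> norm (B\<^sup>2 * (cmod (U x))\<^sup>2)"
      by (simp add: norm_mult power_mult_distrib mult.commute)
  qed measurable
qed

lemma integrable_mult_bounded:
  fixes W Q :: "real \<Rightarrow> complex"
  assumes W: "integrable lebesgue W" and Q: "Q \<in> borel_measurable lebesgue"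
    and bound: "\<And>x. cmod (Q x) \<le> B"
  shows "integrable lebesgue (\<lambda>x. W x * Q x)"
proof (rule Bochner_Integration.integrable_bound[where f="\<lambda>x. B * cmod (W x)"])
  have [measurable]: "W \<in> borel_measurable lebesgue" "Q \<in> borel_measurable lebesgue" using W Q by auto
  show "(\<lambda>x. W x * Q x) \<in> borel_measurable lebesgue" by measurable
  have "0 \<le> B" using bound[of 0] norm_ge_zero order.trans by blast
  then show "AE x in lebesgue. norm (W x * Q x) \<le> norm (B * cmod (W x))"
    using bound by (intro AE_I2) (simp add: norm_mult mult.commute mult_right_mono)
  show "integrable lebesgue (\<lambda>x. B * cmod (W x))" using W by auto
qed

lemma L2_on_subset:
  assumes "L2_on (sphere 0 1) u" and E: "circ_set E \<in> sets lebesgue"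
  shows "L2_on E u"
proof -
  have sub: "circ_set E \<subseteq> {0..2*pi}" unfolding circ_set_def by auto
  have "square_integrable (\<lambda>\<theta>. indicator {0..2*pi} \<theta> *\<^sub>R u (cis \<theta>))"
    using assms(1) unfolding L2_on_iff_square_integrable circ_set_sphere .
  then have "square_integrable (\<lambda>\<theta>. indicator {0..2*pi} \<theta> *\<^sub>R u (cis \<theta>) * indicator (circ_set E) \<theta>)"
    by (rule square_integrable_mult_bounded[where B=1]) (use E in \<open>auto split: split_indicator\<close>)
  moreover have "(\<lambda>\<theta>. indicator {0..2*pi} \<theta> *\<^sub>R u (cis \<theta>) * indicator (circ_set E) \<theta>)
      = (\<lambda>\<theta>. indicator (circ_set E) \<theta> *\<^sub>R u (cis \<theta>))"
    using sub by (intro ext) (auto split: split_indicator)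
  ultimately show ?thesis unfolding L2_on_iff_square_integrable by simp
qed

lemma negative_coeffs_vanish_mult:
  assumes G: "integrable lebesgue G"
    and G0: "\<And>j::nat. j \<ge> 1 \<Longrightarrow> integral\<^sup>L lebesgue (\<lambda>\<theta>. G \<theta> * cis (real j * \<theta>)) = 0"
    and sg: "summable (\<lambda>k. cmod (\<gamma> k))" and n: "n \<ge> 1"
  shows "integral\<^sup>L lebesgue (\<lambda>\<theta>. G \<theta> * (A + (\<Sum>k. \<gamma> k * cis (real k * \<theta>))) * cis (real n * \<theta>)) = 0"
proof -
  define f where "f k \<theta> = \<gamma> k * (G \<theta> * cis (real (k + n) * \<theta>))" for k \<theta>
  have pt: "G \<theta> * (A + (\<Sum>k. \<gamma> k * cis (real k * \<theta>))) * cis (real n * \<theta>)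
      = A * (G \<theta> * cis (real n * \<theta>)) + (\<Sum>k. f k \<theta>)" for \<theta>
  proof -
    have "summable (\<lambda>k. \<gamma> k * cis (real k * \<theta>))"
      by (rule summable_norm_cancel) (simp add: norm_mult sg)
    then have "(\<Sum>k. f k \<theta>) = (\<Sum>k. \<gamma> k * cis (real k * \<theta>)) * (G \<theta> * cis (real n * \<theta>))"
      unfolding f_def by (subst suminf_mult2) (simp_all add: cis_mult algebra_simps)
    then show ?thesis by (simp add: algebra_simps)
  qed
  have int_f: "integrable lebesgue (f k)" for k
    unfolding f_def by (intro integrable_mult_right integrable_mult_cis G)
  have norm_f: "norm (f k \<theta>) = cmod (\<gamma> k) * norm (G \<theta>)" for k \<theta>
    by (simp add: f_def norm_mult)
  have sum_pt: "AE \<theta> in lebesgue. summable (\<lambda>k. norm (f k \<theta>))"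
    and sum_int: "summable (\<lambda>k. integral\<^sup>L lebesgue (\<lambda>\<theta>. norm (f k \<theta>)))"
    unfolding norm_f using sg by (auto intro!: summable_mult2)
  have "integral\<^sup>L lebesgue (f k) = 0" for k
    unfolding f_def using G0[of "k + n"] n by simp
  then show ?thesis
    unfolding pt using integrable_suminf[OF int_f sum_pt sum_int] integrable_mult_cis[OF G] G0[OF n]
    by (simp add: integral_suminf[OF int_f sum_pt sum_int])
qed

lemma H2_mult_power_series:
  assumes H: "H2 g" and sg: "summable (\<lambda>k. cmod (\<gamma> k))"
    and M: "\<And>z. cmod z = 1 \<Longrightarrow> M z = A + (\<Sum>k. \<gamma> k * z ^ k)"
  shows "H2 (\<lambda>z. g z * M z)"
proof -
  define m where "m \<phi> = A + (\<Sum>k. \<gamma> k * cis (real k * \<phi>))" for \<phi>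
  have M_cis: "M (cis \<phi>) = m \<phi>" for \<phi> by (simp only: M m_def norm_cis Complex.DeMoivre)
  have [measurable]: "m \<in> borel_measurable lebesgue"
    unfolding m_def by (rule fourier_series_measurable[OF sg])
  have L2: "L2_on (sphere 0 1) g"
    and G0': "\<And>n::nat. n \<ge> 1 \<Longrightarrow> (LINT \<theta>:{0..2*pi}|lebesgue. g (cis \<theta>) * cis (real n * \<theta>)) = 0"
    using H unfolding H2_def by auto
  define G where "G \<theta> = indicator {0..2*pi} \<theta> *\<^sub>R g (cis \<theta>)" for \<theta>
  have set_int_G: "(LINT \<theta>:{0..2*pi}|lebesgue. g (cis \<theta>) * F \<theta>) = integral\<^sup>L lebesgue (\<lambda>\<theta>. G \<theta> * F \<theta>)"
    for F unfolding set_lebesgue_integral_def G_def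
    by (intro Bochner_Integration.integral_cong) (auto split: split_indicator)
  have G_int: "integrable lebesgue G"
    using L2_on_integrable[OF L2] unfolding G_def circ_set_sphere .
  have G0: "integral\<^sup>L lebesgue (\<lambda>\<theta>. G \<theta> * cis (real j * \<theta>)) = 0" if "j \<ge> 1" for j :: nat
    using G0'[OF that] unfolding set_int_G .
  have "square_integrable (\<lambda>\<theta>. G \<theta> * m \<theta>)"
    using L2 unfolding L2_on_iff_square_integrable circ_set_sphere G_def[symmetric]
    by (rule square_integrable_mult_bounded) (auto simp: m_def intro: fourier_series_bound[OF sg])
  moreover have "(\<lambda>\<theta>. G \<theta> * m \<theta>) = (\<lambda>\<theta>. indicator {0..2*pi} \<theta> *\<^sub>R (g (cis \<theta>) * M (cis \<theta>)))"
    unfolding G_def M_cis by (auto split: split_indicator)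
  ultimately have "L2_on (sphere 0 1) (\<lambda>z. g z * M z)"
    unfolding L2_on_iff_square_integrable circ_set_sphere by simp
  moreover have "(LINT \<theta>:{0..2*pi}|lebesgue. g (cis \<theta>) * M (cis \<theta>) * cis (real n * \<theta>)) = 0"
    if "n \<ge> 1" for n :: nat
    using negative_coeffs_vanish_mult[OF G_int G0 sg that, of A]
    unfolding M_cis mult.assoc set_int_G[of "\<lambda>\<theta>. m \<theta> * cis (real n * \<theta>)"] by (simp add: m_def)
  ultimately show ?thesis unfolding H2_def by auto
qed

lemma first_order_condition:
  assumes U: "square_integrable U" and V: "square_integrable V" and t0: "t0 > 0"
    and min: "\<And>t. 0 < t \<Longrightarrow> t \<le> t0 \<Longrightarrow>
       integral\<^sup>L lebesgue (\<lambda>x. (cmod (U x))\<^sup>2) \<le> integral\<^sup>L lebesgue (\<lambda>x. (cmod (U x + complex_of_real t * V x))\<^sup>2)"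
  shows "0 \<le> Re (integral\<^sup>L lebesgue (\<lambda>x. U x * cnj (V x)))"
proof (rule ccontr)
  have int_UV: "integrable lebesgue (\<lambda>x. U x * cnj (V x))" by (rule square_integrable_product[OF U V])
  have int_U: "integrable lebesgue (\<lambda>x. (cmod (U x))\<^sup>2)" and int_V: "integrable lebesgue (\<lambda>x. (cmod (V x))\<^sup>2)"
    using U V unfolding square_integrable_def by auto
  define R where "R x = Re (U x * cnj (V x))" for x
  define X where "X = Re (integral\<^sup>L lebesgue (\<lambda>x. U x * cnj (V x)))"
  define Y where "Y = integral\<^sup>L lebesgue (\<lambda>x. (cmod (V x))\<^sup>2)"
  have "Y \<ge> 0" unfolding Y_def by simp
  have int_R: "integrable lebesgue R" unfolding R_def by (rule integrable_Re[OF int_UV])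
  have X_R: "X = integral\<^sup>L lebesgue R" unfolding X_def R_def using integral_Re[OF int_UV] by simp
  have expand: "(cmod (U x + complex_of_real t * V x))\<^sup>2
      = (cmod (U x))\<^sup>2 + 2 * t * R x + t\<^sup>2 * (cmod (V x))\<^sup>2" for x t
    unfolding cmod_power2 R_def by (simp add: power2_eq_square algebra_simps)
  have quadratic: "0 \<le> 2 * t * X + t\<^sup>2 * Y" if "0 < t" "t \<le> t0" for t
  proof -
    have "integral\<^sup>L lebesgue (\<lambda>x. (cmod (U x + complex_of_real t * V x))\<^sup>2)
        = integral\<^sup>L lebesgue (\<lambda>x. (cmod (U x))\<^sup>2) + 2 * t * X + t\<^sup>2 * Y"
      unfolding expand X_R Y_def using int_U int_V int_R by simp
    then show ?thesis using min[OF that] by simp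
  qed
  assume "\<not> 0 \<le> X"
  then have "X < 0" by simp
  define t where "t = min t0 (- X / (Y + 1))"
  have "0 < t" using t0 \<open>X < 0\<close> \<open>Y \<ge> 0\<close> by (simp add: t_def divide_neg_pos)
  have "t * Y \<le> (- X / (Y + 1)) * Y" using \<open>Y \<ge> 0\<close> by (intro mult_right_mono) (auto simp: t_def)
  also have "\<dots> \<le> - X" using \<open>X < 0\<close> \<open>Y \<ge> 0\<close> by (simp add: field_simps)
  finally have "t * (2 * X + t * Y) < 0" using \<open>X < 0\<close> \<open>0 < t\<close> by (simp add: mult_pos_neg)
  then show False using quadratic[OF \<open>0 < t\<close>] by (simp add: t_def power2_eq_square algebra_simps)
qed

lemma norm_one_minus_small_multiple:
  assumes t: "0 < t" and e: "0 < \<epsilon>" "\<epsilon> \<le> Re q" and B: "cmod q \<le> B" and tl: "t \<le> \<epsilon> / B\<^sup>2"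
  shows "cmod (1 - complex_of_real t * q) \<le> 1"
proof -
  have "0 < B" using B e complex_Re_le_cmod[of q] by linarith
  then have "t * B\<^sup>2 \<le> \<epsilon>" using tl by (simp add: field_simps)
  have "(cmod q)\<^sup>2 \<le> B\<^sup>2" by (rule power_mono[OF B]) simp
  then have "t\<^sup>2 * (cmod q)\<^sup>2 \<le> t\<^sup>2 * B\<^sup>2" by (rule mult_left_mono) simp
  also have "\<dots> = t * (t * B\<^sup>2)" by (simp add: power2_eq_square)
  also have "\<dots> \<le> t * Re q" using \<open>t * B\<^sup>2 \<le> \<epsilon>\<close> e t by simp
  moreover have "0 \<le> t * Re q" using t e by simp
  ultimately have "1 - 2 * t * Re q + t\<^sup>2 * (cmod q)\<^sup>2 \<le> 1" by linarith
  moreover have "(cmod (1 - complex_of_real t * q))\<^sup>2 = 1 - 2 * t * Re q + t\<^sup>2 * (cmod q)\<^sup>2"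
    unfolding cmod_power2 by (simp add: power2_eq_square algebra_simps)
  ultimately have "(cmod (1 - complex_of_real t * q))\<^sup>2 \<le> 1\<^sup>2" by simp
  then show ?thesis by (rule power2_le_imp_le) simp
qed

lemma nonneg_of_perturbation:
  fixes X Y :: real
  assumes "\<And>\<epsilon>. 0 < \<epsilon> \<Longrightarrow> 0 \<le> X + \<epsilon> * Y"
  shows "0 \<le> X"
proof -
  have "((\<lambda>\<epsilon>. X + \<epsilon> * Y) \<longlongrightarrow> X) (at_right 0)"
    by (auto intro!: tendsto_eq_intros)
  then show ?thesis
    by (rule tendsto_lowerbound) (auto simp: eventually_at_right_less assms intro: eventually_at_rightI[of 0 1])
qed

lemma norm_on_eq:
  "norm_on E F = sqrt (1/(2*pi) * integral\<^sup>L lebesgue (\<lambda>\<theta>. (cmod (indicator (circ_set E) \<theta> *\<^sub>R F (cis \<theta>)))\<^sup>2))"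
proof -
  have "inner_on E F F = complex_of_real (1/(2*pi)) *
      (LINT \<theta>:circ_set E|lebesgue. complex_of_real ((cmod (F (cis \<theta>)))\<^sup>2))"
    unfolding inner_on_def complex_norm_square ..
  moreover have "(LINT \<theta>:circ_set E|lebesgue. (cmod (F (cis \<theta>)))\<^sup>2)
      = integral\<^sup>L lebesgue (\<lambda>\<theta>. (cmod (indicator (circ_set E) \<theta> *\<^sub>R F (cis \<theta>)))\<^sup>2)"
    unfolding set_lebesgue_integral_def
    by (intro Bochner_Integration.integral_cong) (auto split: split_indicator)
  ultimately show ?thesis unfolding norm_on_def set_integral_complex_of_real by simp
qed

text \<open>Multiplying the solution by an H2-compatible factor of modulus at most one keeps it
  feasible, hence cannot decrease the distance to f on I.\<close>
lemma bep_solution_contraction: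
  assumes sol: "bep_solution I J f g0"
    and H2M: "H2 (\<lambda>z. g0 z * M z)" and M: "\<And>\<theta>. cmod (M (cis \<theta>)) \<le> 1"
  shows "integral\<^sup>L lebesgue (\<lambda>\<theta>. (cmod (indicator (circ_set I) \<theta> *\<^sub>R (f (cis \<theta>) - g0 (cis \<theta>))))\<^sup>2)
       \<le> integral\<^sup>L lebesgue (\<lambda>\<theta>. (cmod (indicator (circ_set I) \<theta> *\<^sub>R (f (cis \<theta>) - g0 (cis \<theta>) * M (cis \<theta>))))\<^sup>2)"
proof -
  have g0_J: "AE \<theta> in lebesgue. \<theta> \<in> circ_set J \<longrightarrow> cmod (g0 (cis \<theta>)) \<le> 1"
    using sol unfolding bep_solution_def bep_feasible_def by auto
  have "AE \<theta> in lebesgue. \<theta> \<in> circ_set J \<longrightarrow> cmod (g0 (cis \<theta>) * M (cis \<theta>)) \<le> 1"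
    using g0_J by eventually_elim (auto simp: norm_mult intro: mult_le_one M)
  then have "bep_feasible J (\<lambda>z. g0 z * M z)" unfolding bep_feasible_def using H2M by simp
  then have "norm_on I (\<lambda>z. f z - g0 z) \<le> norm_on I (\<lambda>z. f z - g0 z * M z)"
    using sol unfolding bep_solution_def by blast
  then show ?thesis unfolding norm_on_eq by (simp add: divide_le_cancel)
qed

definition residual :: "complex set \<Rightarrow> (complex \<Rightarrow> complex) \<Rightarrow> (complex \<Rightarrow> complex) \<Rightarrow> real \<Rightarrow> complex" where
  "residual I f g0 \<theta> = indicator (circ_set I) \<theta> *\<^sub>R ((f (cis \<theta>) - g0 (cis \<theta>)) * cnj (g0 (cis \<theta>)))"

text \<open>The residual density is the product of the square integrable functions 1_I (f - g0) and
  the conjugate of 1_I g0, hence integrable.\<close>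
lemma residual_factor:
  "residual I f g0 \<theta> = indicator (circ_set I) \<theta> *\<^sub>R (f (cis \<theta>) - g0 (cis \<theta>))
      * cnj (indicator (circ_set I) \<theta> *\<^sub>R g0 (cis \<theta>))"
  unfolding residual_def by (auto split: split_indicator)

lemma residual_integrable:
  assumes "L2_on I f" "L2_on I g0"
  shows "integrable lebesgue (residual I f g0)"
  unfolding residual_factor[abs_def] scaleR_diff_right using assms
  by (intro square_integrable_product square_integrable_diff) (auto simp: L2_on_iff_square_integrable)

lemma bep_solution_L2_on:
  assumes "bep_solution I J f g0" "circ_set I \<in> sets lebesgue"
  shows "L2_on I g0"
  using assms L2_on_subset unfolding bep_solution_def bep_feasible_def H2_def by blast

text \<open>First variation of BEP in the direction g0 Q: if Q is a power series on the circle with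
  absolutely summable coefficients and with real part bounded below by eps > 0, then the
  perturbations g0 (1 - t Q) are admissible for small t > 0 and optimality of g0 yields
  Re of the inner product of (f - g0) conj g0 with Q over I being non-negative.\<close>
lemma bep_first_variation:
  assumes sol: "bep_solution I J f g0" and f: "L2_on I f" and I: "circ_set I \<in> sets lebesgue"
    and sg: "summable (\<lambda>k. cmod (\<gamma> k))" and Q: "\<And>z. cmod z = 1 \<Longrightarrow> Q z = A + (\<Sum>k. \<gamma> k * z ^ k)"
    and e: "0 < \<epsilon>" and Re_Q: "\<And>\<theta>. \<epsilon> \<le> Re (Q (cis \<theta>))" and bound: "\<And>\<theta>. cmod (Q (cis \<theta>)) \<le> B"
  shows "0 \<le> Re (integral\<^sup>L lebesgue (\<lambda>\<theta>. residual I f g0 \<theta> * cnj (Q (cis \<theta>))))"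
proof -
  have g0: "L2_on I g0" by (rule bep_solution_L2_on[OF sol I])
  have H2_g0: "H2 g0" using sol unfolding bep_solution_def bep_feasible_def by simp
  define U where "U \<theta> = indicator (circ_set I) \<theta> *\<^sub>R (f (cis \<theta>) - g0 (cis \<theta>))" for \<theta>
  define G where "G \<theta> = indicator (circ_set I) \<theta> *\<^sub>R g0 (cis \<theta>)" for \<theta>
  define V where "V \<theta> = G \<theta> * Q (cis \<theta>)" for \<theta>
  have G_L2: "square_integrable G"
    using g0 unfolding G_def[abs_def] L2_on_iff_square_integrable .
  have "square_integrable (\<lambda>\<theta>. indicator (circ_set I) \<theta> *\<^sub>R f (cis \<theta>) - G \<theta>)"
    using f G_L2 unfolding L2_on_iff_square_integrable by (rule square_integrable_diff)
  then have U_L2: "square_integrable U"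
    unfolding U_def[abs_def] G_def scaleR_diff_right .
  have "(\<lambda>\<theta>. Q (cis \<theta>)) = (\<lambda>\<theta>. A + (\<Sum>k. \<gamma> k * cis (real k * \<theta>)))"
    by (simp only: Q norm_cis Complex.DeMoivre)
  then have [measurable]: "(\<lambda>\<theta>. Q (cis \<theta>)) \<in> borel_measurable lebesgue"
    using fourier_series_measurable[OF sg] by simp
  have V_L2: "square_integrable V"
    unfolding V_def by (rule square_integrable_mult_bounded[OF G_L2 _ bound]) measurable
  have "0 < B" using bound[of 0] Re_Q[of 0] e complex_Re_le_cmod[of "Q (cis 0)"] by linarith
  then have t0: "0 < \<epsilon> / B\<^sup>2" using e by simp
  have "0 \<le> Re (integral\<^sup>L lebesgue (\<lambda>x. U x * cnj (V x)))"
  proof (rule first_order_condition[OF U_L2 V_L2 t0])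
    fix t :: real assume t: "0 < t" "t \<le> \<epsilon> / B\<^sup>2"
    define M where "M z = 1 - complex_of_real t * Q z" for z
    have H2_M: "H2 (\<lambda>z. g0 z * M z)"
    proof (rule H2_mult_power_series[OF H2_g0])
      show "summable (\<lambda>k. cmod (- complex_of_real t * \<gamma> k))"
        using summable_mult[OF sg, of "\<bar>t\<bar>"] by (simp add: norm_mult)
      fix z :: complex assume "cmod z = 1"
      then have "summable (\<lambda>k. norm (\<gamma> k * z ^ k))" using sg by (simp add: norm_mult norm_power)
      then have "summable (\<lambda>k. \<gamma> k * z ^ k)" by (rule summable_norm_cancel)
      then have "(\<Sum>k. (- complex_of_real t * \<gamma> k) * z ^ k) = - complex_of_real t * (\<Sum>k. \<gamma> k * z ^ k)"
        using suminf_mult[of "\<lambda>k. \<gamma> k * z ^ k" "- complex_of_real t"] by (simp add: mult.assoc)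
      then show "M z = (1 - complex_of_real t * A) + (\<Sum>k. (- complex_of_real t * \<gamma> k) * z ^ k)"
        unfolding M_def Q[OF \<open>cmod z = 1\<close>] by (simp add: algebra_simps)
    qed
    have M_le_1: "cmod (M (cis \<theta>)) \<le> 1" for \<theta>
      unfolding M_def by (rule norm_one_minus_small_multiple[OF t(1) e Re_Q bound t(2)])
    have perturbed: "indicator (circ_set I) \<theta> *\<^sub>R (f (cis \<theta>) - g0 (cis \<theta>) * M (cis \<theta>))
        = U \<theta> + complex_of_real t * V \<theta>" for \<theta>
      unfolding U_def G_def V_def M_def by (auto split: split_indicator simp: algebra_simps)
    show "integral\<^sup>L lebesgue (\<lambda>x. (cmod (U x))\<^sup>2)
        \<le> integral\<^sup>L lebesgue (\<lambda>x. (cmod (U x + complex_of_real t * V x))\<^sup>2)"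
      using bep_solution_contraction[OF sol H2_M M_le_1] unfolding perturbed U_def .
  qed
  moreover have "U x * cnj (V x) = residual I f g0 x * cnj (Q (cis x))" for x
    unfolding U_def V_def G_def residual_def by (auto split: split_indicator)
  ultimately show ?thesis by simp
qed

lemma herglotz_int_circle_continuous:
  assumes "integrable lebesgue w" "0 \<le> r" "r < 1"
  shows "continuous_on UNIV (\<lambda>\<theta>. herglotz_int w (complex_of_real r * cis \<theta>))"
proof (rule continuous_on_compose2[OF herglotz_int_continuous_on_ball[OF assms(1)]])
  show "continuous_on UNIV (\<lambda>\<theta>. complex_of_real r * cis \<theta>)"
    by (intro continuous_intros continuous_on_cis)
  show "(\<lambda>\<theta>. complex_of_real r * cis \<theta>) ` UNIV \<subseteq> ball 0 1"
    using assms by (auto simp: norm_mult)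
qed

lemma herglotz_int_circle_measurable:
  assumes "integrable lebesgue w" "0 \<le> r" "r < 1"
  shows "(\<lambda>\<theta>. herglotz_int w (complex_of_real r * cis \<theta>)) \<in> borel_measurable lebesgue"
  by (rule measurable_completion)
     (simp add: borel_measurable_continuous_onI herglotz_int_circle_continuous[OF assms])

text \<open>The variational inequality on the circle of radius r < 1: there the Herglotz integral
  of a non-negative weight is a power series with absolutely summable coefficients and
  non-negative real part, so adding eps > 0 makes it admissible in the first variation.\<close>
lemma variational_inequality_radius:
  assumes sol: "bep_solution I J f g0" and f: "L2_on I f" and I: "circ_set I \<in> sets lebesgue"
    and w: "integrable lebesgue w" and w_nonneg: "AE \<theta> in lebesgue. 0 \<le> w \<theta>"
    and r: "0 \<le> r" "r < 1"
  shows "0 \<le> Re (integral\<^sup>L lebesgue (\<lambda>\<theta>. residual I f g0 \<theta> * cnj (herglotz_int w (complex_of_real r * cis \<theta>))))"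
proof -
  define P where "P \<theta> = herglotz_int w (complex_of_real r * cis \<theta>)" for \<theta>
  obtain A \<gamma> where sg: "summable (\<lambda>k. cmod (\<gamma> k))"
    and series: "\<And>z. cmod z \<le> 1 \<Longrightarrow> herglotz_int w (complex_of_real r * z) = A + (\<Sum>k. \<gamma> k * z ^ k)"
    using herglotz_int_circle_series[OF w r] by metis
  define B where "B = 1/(2*pi) * (2/(1-r) * integral\<^sup>L lebesgue (\<lambda>\<theta>. \<bar>w \<theta>\<bar>))"
  have P_bound: "cmod (P \<theta>) \<le> B" for \<theta>
    unfolding P_def B_def
  proof (rule herglotz_int_bound[OF w])
    have "1 - r \<le> cmod (cis \<phi> - complex_of_real r * cis \<theta>)" for \<phi>
      using norm_triangle_ineq2[of "cis \<phi>" "complex_of_real r * cis \<theta>"] r by (simp add: norm_mult)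
    then show "AE \<phi> in lebesgue. w \<phi> \<noteq> 0 \<longrightarrow> 1 - r \<le> cmod (cis \<phi> - complex_of_real r * cis \<theta>)"
      by simp
  qed (use r in \<open>auto simp: norm_mult\<close>)
  have P_Re: "0 \<le> Re (P \<theta>)" for \<theta>
    unfolding P_def by (rule herglotz_int_Re_nonneg[OF w w_nonneg]) (use r in \<open>simp add: norm_mult\<close>)
  have res: "integrable lebesgue (residual I f g0)"
    using residual_integrable[OF f bep_solution_L2_on[OF sol I]] .
  have res_P: "integrable lebesgue (\<lambda>\<theta>. residual I f g0 \<theta> * cnj (P \<theta>))"
  proof (rule integrable_mult_bounded[OF res, where B=B])
    show "(\<lambda>\<theta>. cnj (P \<theta>)) \<in> borel_measurable lebesgue" unfolding P_def using herglotz_int_circle_measurable[OF w r] by measurable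
    show "cmod (cnj (P \<theta>)) \<le> B" for \<theta> using P_bound[of \<theta>] by simp
  qed
  have "0 \<le> Re (integral\<^sup>L lebesgue (\<lambda>\<theta>. residual I f g0 \<theta> * cnj (P \<theta>)))
            + \<epsilon> * Re (integral\<^sup>L lebesgue (residual I f g0))" if "0 < \<epsilon>" for \<epsilon>
  proof -
    define Q where "Q z = herglotz_int w (complex_of_real r * z) + complex_of_real \<epsilon>" for z
    have Q_cis: "Q (cis \<theta>) = P \<theta> + complex_of_real \<epsilon>" for \<theta> unfolding Q_def P_def ..
    have "0 \<le> Re (integral\<^sup>L lebesgue (\<lambda>\<theta>. residual I f g0 \<theta> * cnj (Q (cis \<theta>))))"
    proof (rule bep_first_variation[OF sol f I sg _ that])
      show "Q z = (A + complex_of_real \<epsilon>) + (\<Sum>k. \<gamma> k * z ^ k)" if "cmod z = 1" for z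
        unfolding Q_def series[OF eq_refl[OF that]] by simp
      show "\<epsilon> \<le> Re (Q (cis \<theta>))" for \<theta>
        using P_Re[of \<theta>] unfolding Q_cis by simp
      show "cmod (Q (cis \<theta>)) \<le> B + \<epsilon>" for \<theta>
        using norm_triangle_ineq[of "P \<theta>" "complex_of_real \<epsilon>"] P_bound[of \<theta>] that
        unfolding Q_cis by simp
    qed
    moreover have "residual I f g0 \<theta> * cnj (Q (cis \<theta>))
        = residual I f g0 \<theta> * cnj (P \<theta>) + complex_of_real \<epsilon> * residual I f g0 \<theta>" for \<theta>
      unfolding Q_cis by (simp add: algebra_simps)
    ultimately show ?thesis using res res_P by simp
  qed
  then show ?thesis unfolding P_def[symmetric] by (rule nonneg_of_perturbation)
qed

lemma circle_dist_radial:
  assumes "cmod u = 1" "cmod v = 1" "0 \<le> r" "r \<le> 1"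
  shows "cmod (u - v) \<le> 2 * cmod (u - complex_of_real r * v)"
proof -
  have "cmod (u - v) \<le> cmod (u - complex_of_real r * v) + cmod (complex_of_real r * v - v)"
    using norm_triangle_ineq[of "u - complex_of_real r * v" "complex_of_real r * v - v"] by simp
  moreover have "cmod (complex_of_real r * v - v) = 1 - r"
  proof -
    have "cmod (complex_of_real r * v - v) = cmod (complex_of_real (r - 1) * v)"
      by (simp add: algebra_simps)
    then show ?thesis unfolding norm_mult norm_of_real using assms by simp
  qed
  moreover have "1 - r \<le> cmod (u - complex_of_real r * v)"
    using norm_triangle_ineq2[of u "complex_of_real r * v"] assms by (simp add: norm_mult)
  ultimately show ?thesis by linarith
qed

text \<open>Radial limit: if the weight is carried by a compact set K of the circle and R vanishes
  off a closed set C of the circle disjoint from K, the inequalities on the circles of radius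
  r < 1 pass to the boundary by dominated convergence.\<close>
lemma radial_limit_nonneg:
  assumes w: "integrable lebesgue w" and K: "compact K" and C: "closed C" "K \<inter> C = {}" "C \<subseteq> sphere 0 1"
    and supp: "AE \<theta> in lebesgue. w \<theta> \<noteq> 0 \<longrightarrow> cis \<theta> \<in> K"
    and R: "integrable lebesgue R" and R0: "\<And>\<theta>. cis \<theta> \<notin> C \<Longrightarrow> R \<theta> = 0"
    and inner: "\<And>r. 0 \<le> r \<Longrightarrow> r < 1 \<Longrightarrow>
       0 \<le> Re (integral\<^sup>L lebesgue (\<lambda>\<theta>. R \<theta> * cnj (herglotz_int w (complex_of_real r * cis \<theta>))))"
  shows "0 \<le> Re (integral\<^sup>L lebesgue (\<lambda>\<theta>. R \<theta> * cnj (herglotz_int w (cis \<theta>))))"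
proof -
  have cont: "continuous_on (ball 0 1 \<union> C) (herglotz_int w)"
    by (rule herglotz_int_continuous_on[OF w K C(1,2) _ supp]) (use C(3) in auto)
  obtain d where "d > 0" and d: "\<And>k y. k \<in> K \<Longrightarrow> y \<in> C \<Longrightarrow> d \<le> dist k y"
    using separate_compact_closed[OF K C(1,2)] by blast
  define r where "r n = 1 - inverse (real (Suc (Suc n)))" for n
  have r: "0 \<le> r n" "r n < 1" for n unfolding r_def by (auto simp: field_simps)
  have "(\<lambda>n. inverse (real (Suc (Suc n)))) \<longlonglongrightarrow> 0"
    using LIMSEQ_Suc[OF LIMSEQ_inverse_real_of_nat] .
  then have r_lim: "r \<longlonglongrightarrow> 1"
    unfolding r_def using tendsto_diff[OF tendsto_const, of _ 0 sequentially 1] by simp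
  define s where "s n \<theta> = R \<theta> * cnj (herglotz_int w (complex_of_real (r n) * cis \<theta>))" for n \<theta>
  define L where "L \<theta> = R \<theta> * cnj (herglotz_int w (cis \<theta>))" for \<theta>
  have [measurable]: "R \<in> borel_measurable lebesgue" using R by auto
  have s_meas [measurable]: "s n \<in> borel_measurable lebesgue" for n
    unfolding s_def using herglotz_int_circle_measurable[OF w r[of n]] by measurable
  have s_lim: "(\<lambda>n. s n \<theta>) \<longlonglongrightarrow> L \<theta>" for \<theta>
  proof (cases "cis \<theta> \<in> C")
    case True
    have "(\<lambda>n. complex_of_real (r n) * cis \<theta>) \<longlonglongrightarrow> complex_of_real 1 * cis \<theta>"
      by (intro tendsto_intros r_lim)
    then have "(\<lambda>n. herglotz_int w (complex_of_real (r n) * cis \<theta>)) \<longlonglongrightarrow> herglotz_int w (cis \<theta>)"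
      using True r by (intro continuous_on_tendsto_compose[OF cont]) (auto simp: norm_mult)
    then show ?thesis unfolding s_def L_def by (intro tendsto_intros)
  qed (simp add: s_def L_def R0)
  define B where "B = 1/(2*pi) * (2/(d/2) * integral\<^sup>L lebesgue (\<lambda>\<theta>. \<bar>w \<theta>\<bar>))"
  have herglotz_bound: "cmod (herglotz_int w (complex_of_real \<rho> * cis \<theta>)) \<le> B"
    if "cis \<theta> \<in> C" "0 \<le> \<rho>" "\<rho> \<le> 1" for \<theta> \<rho>
    unfolding B_def
  proof (rule herglotz_int_bound[OF w])
    have "d/2 \<le> cmod (cis \<phi> - complex_of_real \<rho> * cis \<theta>)" if "cis \<phi> \<in> K" for \<phi>
      using d[OF that \<open>cis \<theta> \<in> C\<close>] circle_dist_radial[of "cis \<phi>" "cis \<theta>" \<rho>] \<open>0 \<le> \<rho>\<close> \<open>\<rho> \<le> 1\<close>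
      by (simp add: dist_norm)
    then show "AE \<phi> in lebesgue. w \<phi> \<noteq> 0 \<longrightarrow> d/2 \<le> cmod (cis \<phi> - complex_of_real \<rho> * cis \<theta>)"
      using supp by (auto elim!: eventually_mono)
  qed (use that \<open>d > 0\<close> in \<open>auto simp: norm_mult\<close>)
  have s_bound: "AE \<theta> in lebesgue. norm (s n \<theta>) \<le> B * norm (R \<theta>)" for n
  proof (rule AE_I2)
    fix \<theta>
    show "norm (s n \<theta>) \<le> B * norm (R \<theta>)"
    proof (cases "cis \<theta> \<in> C")
      case True
      have "cmod (herglotz_int w (complex_of_real (r n) * cis \<theta>)) \<le> B"
        using herglotz_bound[OF True r(1)[of n] less_imp_le[OF r(2)[of n]]] .
      then have "cmod (R \<theta>) * cmod (herglotz_int w (complex_of_real (r n) * cis \<theta>)) \<le> cmod (R \<theta>) * B"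
        by (rule mult_left_mono) simp
      then show ?thesis unfolding s_def norm_mult complex_mod_cnj by (simp only: mult.commute)
    qed (simp add: s_def R0)
  qed
  have "L \<in> borel_measurable lebesgue" by (rule borel_measurable_LIMSEQ_metric[OF s_meas s_lim])
  then have "(\<lambda>n. integral\<^sup>L lebesgue (s n)) \<longlonglongrightarrow> integral\<^sup>L lebesgue L"
    using R s_lim s_bound by (intro integral_dominated_convergence[where w="\<lambda>\<theta>. B * norm (R \<theta>)"]) auto
  then show ?thesis
    using inner[OF r] unfolding s_def[abs_def] L_def[abs_def]
    by (intro LIMSEQ_le_const[OF tendsto_Re]) auto
qed

lemma Tc_closure_of:
  assumes "I \<subseteq> sphere 0 1"
  shows "Tc closure_of I = closure I"
proof -
  have "closure I \<subseteq> sphere 0 1" using assms by (intro closure_minimal) auto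
  then show ?thesis
    unfolding Tc_def closure_of_subtopology euclidean_closure_of using assms by (auto simp: Int_absorb1)
qed

lemma Tc_interior_of_complement:
  assumes "I \<subseteq> sphere 0 1"
  shows "Tc interior_of (sphere 0 1 - I) = sphere 0 1 - closure I"
  using interior_of_complement[of Tc I] Tc_closure_of[OF assms] by (simp add: Tc_def)

lemma ess_supp_in_compact:
  assumes "ess_supp_in h (sphere 0 1 - closure I)"
  obtains K where "compact K" "K \<inter> closure I = {}"
    "AE \<theta> in lebesgue. \<theta> \<in> {0..2*pi} \<longrightarrow> cis \<theta> \<notin> K \<longrightarrow> h (cis \<theta>) = 0"
proof -
  obtain K where K: "closedin Tc K" "K \<subseteq> sphere 0 1 - closure I"
    and h0: "AE \<theta> in lebesgue. \<theta> \<in> {0..2*pi} \<longrightarrow> cis \<theta> \<notin> K \<longrightarrow> h (cis \<theta>) = 0"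
    using assms unfolding ess_supp_in_def by blast
  have "closed K" using K(1) unfolding Tc_def by (simp add: closedin_closed_eq)
  then have "compact K"
    using bounded_subset[OF bounded_sphere, of K 0 1] K(2) by (auto simp: compact_eq_bounded_closed)
  moreover have "K \<inter> closure I = {}" using K(2) by blast
  ultimately show ?thesis using h0 by (rule that)
qed

lemma Linf_T_integrable:
  assumes "Linf_T h" "S \<in> sets lebesgue" "S \<subseteq> {0..2*pi}"
  shows "integrable lebesgue (\<lambda>\<theta>. indicator S \<theta> * h (cis \<theta>))"
proof -
  have [measurable]: "(\<lambda>\<theta>. indicator {0..2*pi} \<theta> *\<^sub>R h (cis \<theta>)) \<in> borel_measurable lebesgue" "S \<in> sets lebesgue"
    using assms unfolding Linf_T_def set_borel_measurable_def by auto
  obtain B where B: "AE \<theta> in lebesgue. \<theta> \<in> {0..2*pi} \<longrightarrow> \<bar>h (cis \<theta>)\<bar> \<le> B"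
    using assms unfolding Linf_T_def by blast
  have eq: "(\<lambda>\<theta>. indicator S \<theta> * h (cis \<theta>)) = (\<lambda>\<theta>. indicator S \<theta> * (indicator {0..2*pi} \<theta> *\<^sub>R h (cis \<theta>)))"
    using assms(3) by (intro ext) (auto split: split_indicator)
  show ?thesis
  proof (rule Bochner_Integration.integrable_bound[where f="\<lambda>\<theta>. indicator {0..2*pi} \<theta> *\<^sub>R B"])
    show "integrable lebesgue (\<lambda>\<theta>. indicator {0..2*pi} \<theta> *\<^sub>R B)" by (rule integrable_indicator) auto
    show "(\<lambda>\<theta>. indicator S \<theta> * h (cis \<theta>)) \<in> borel_measurable lebesgue" unfolding eq by measurable
    show "AE \<theta> in lebesgue. norm (indicator S \<theta> * h (cis \<theta>)) \<le> norm (indicator {0..2*pi} \<theta> *\<^sub>R B)"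
      using B by eventually_elim (use assms(3) in \<open>auto simp: indicator_def\<close>)
  qed
qed

lemma inner_on_residual:
  "inner_on I (\<lambda>z. (f z - g0 z) * cnj (g0 z)) a
     = complex_of_real (1/(2*pi)) * integral\<^sup>L lebesgue (\<lambda>\<theta>. residual I f g0 \<theta> * cnj (a (cis \<theta>)))"
  unfolding inner_on_def set_lebesgue_integral_def residual_def
  by (intro arg_cong2[where f="(*)"] refl Bochner_Integration.integral_cong) (auto split: split_indicator)

lemma herglotz_weight:
  assumes I: "I \<subseteq> sphere 0 1" "circ_set I \<in> sets lebesgue" and h: "Linf_T h"
    and h_nonneg: "AE \<theta> in lebesgue. \<theta> \<in> {0..2*pi} \<longrightarrow> h (cis \<theta>) \<ge> 0"
    and h_supp: "ess_supp_in h (Tc interior_of (sphere 0 1 - I))"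
    and w: "w = (\<lambda>\<theta>. indicator (circ_set (sphere 0 1 - I)) \<theta> * h (cis \<theta>))"
  obtains K where "integrable lebesgue w" "AE \<theta> in lebesgue. 0 \<le> w \<theta>"
    "compact K" "K \<inter> closure I = {}" "AE \<theta> in lebesgue. w \<theta> \<noteq> 0 \<longrightarrow> cis \<theta> \<in> K"
proof -
  have J: "circ_set (sphere 0 1 - I) = {0..2*pi} - circ_set I" unfolding circ_set_def by auto
  have "ess_supp_in h (sphere 0 1 - closure I)"
    using h_supp unfolding Tc_interior_of_complement[OF I(1)] .
  then obtain K where K: "compact K" "K \<inter> closure I = {}"
    and h0: "AE \<theta> in lebesgue. \<theta> \<in> {0..2*pi} \<longrightarrow> cis \<theta> \<notin> K \<longrightarrow> h (cis \<theta>) = 0"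
    by (rule ess_supp_in_compact)
  have w_int: "integrable lebesgue w"
    unfolding w by (rule Linf_T_integrable[OF h]) (use I J in auto)
  have w_nonneg: "AE \<theta> in lebesgue. 0 \<le> w \<theta>"
    using h_nonneg by eventually_elim (auto simp: w J indicator_def)
  have w_supp: "AE \<theta> in lebesgue. w \<theta> \<noteq> 0 \<longrightarrow> cis \<theta> \<in> K"
    using h0 by eventually_elim (auto simp: w J indicator_def)
  show ?thesis by (rule that[OF w_int w_nonneg K w_supp])
qed

lemma residual_vanishes_off_closure:
  "cis \<theta> \<notin> closure I \<Longrightarrow> residual I f g0 \<theta> = 0"
  using closure_subset[of I] by (auto simp: residual_def circ_set_def split: split_indicator)

theorem mainTheorem10:
  fixes I J :: "complex set" and f g0 :: "complex \<Rightarrow> complex" and h :: "complex \<Rightarrow> real"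
  assumes "I \<subseteq> sphere 0 1" and "J = sphere 0 1 - I"
    and "tmeasurable I" and "ell I > 0" and "ell J > 0"
    and "L2_on I f"
    and "bep_solution I J f g0"
    and "Linf_T h"
    and "AE \<theta> in lebesgue. \<theta> \<in> {0..2*pi} \<longrightarrow> h (cis \<theta>) \<ge> 0"
    and "ess_supp_in h (Tc interior_of J)"
  shows "continuous_on (ball 0 1 \<union> Tc closure_of I) (herglotz J h) \<and>
         Re (inner_on I (\<lambda>z. (f z - g0 z) * cnj (g0 z)) (herglotz J h)) \<ge> 0"
proof -
  have SI: "circ_set I \<in> sets lebesgue" using assms(3) unfolding tmeasurable_def .
  define w where "w \<theta> = indicator (circ_set J) \<theta> * h (cis \<theta>)" for \<theta>
  have herglotz: "herglotz J h = herglotz_int w" unfolding w_def by (rule herglotz_eq_herglotz_int)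
  have h_supp: "ess_supp_in h (Tc interior_of (sphere 0 1 - I))" using assms(10) unfolding assms(2) .
  have w_eq: "w = (\<lambda>\<theta>. indicator (circ_set (sphere 0 1 - I)) \<theta> * h (cis \<theta>))"
    unfolding w_def[abs_def] assms(2) ..
  obtain K where w_int: "integrable lebesgue w" and w_nonneg: "AE \<theta> in lebesgue. 0 \<le> w \<theta>"
    and K: "compact K" "K \<inter> closure I = {}" and supp: "AE \<theta> in lebesgue. w \<theta> \<noteq> 0 \<longrightarrow> cis \<theta> \<in> K"
    by (rule herglotz_weight[OF assms(1) SI assms(8,9) h_supp w_eq])
  have closure: "closure I \<subseteq> sphere 0 1" using assms(1) by (intro closure_minimal) auto
  have "continuous_on (ball 0 1 \<union> closure I) (herglotz_int w)"
    by (rule herglotz_int_continuous_on[OF w_int K(1) closed_closure K(2) _ supp]) (use closure in auto)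
  moreover have "0 \<le> Re (integral\<^sup>L lebesgue (\<lambda>\<theta>. residual I f g0 \<theta> * cnj (herglotz_int w (cis \<theta>))))"
    using radial_limit_nonneg[OF w_int K(1) closed_closure K(2) closure supp
        residual_integrable[OF assms(6) bep_solution_L2_on[OF assms(7) SI]] residual_vanishes_off_closure
        variational_inequality_radius[OF assms(7,6) SI w_int w_nonneg]] .
  ultimately show ?thesis
    unfolding herglotz Tc_closure_of[OF assms(1)] inner_on_residual by simp
qed


thm_deps mainTheorem10

end
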